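(* For every $1\leq p <\infty$, $B^{p}$ is a Banach space.
   Context: Let $\mathcal{B}$ be the Borel $\sigma$-algebra of $\mathbb{R}$, $\lambda$ the Lebesgue measure, and $\mathcal{B}_{\infty}$ the $\sigma$-algebra on $\mathbb{R}^{\mathbb{N}}$ generated by the cylinder sets $\prod_{i=1}^{m}C_{i}\times\prod_{i=m+1}^{\infty}\mathbb{R}$ with $C_i\in\mathcal{B}$, $m\in\mathbb{N}$. Let $\mathcal{F}(\mathcal{B},\lambda)$ be the set of finite rectangles $\prod_{i\in\mathbb{N}}C_{i}$ with $C_i\in\mathcal{B}$ and $\prod_{i}\lambda(C_i)\in[0,\infty)$, with $\mathrm{vol}(\prod_{i}C_i):=\prod_i\lambda(C_i)$. The measure $\mu$ is the restriction to $\mathcal{B}_{\infty}$ of the outer measure $\mu^{\ast}(A):=\inf\{\sum_{n}\mathrm{vol}(\mathscr{C}_{n}) : \mathscr{C}_{n}\in\mathcal{F}(\mathcal{B},\lambda),\ A\subset\bigcup_{n}\mathscr{C}_{n}\}$ ($\inf\varnothing=\infty$). Let $I:=\mathbb{Z}^{\mathbb{N}}$ and, for $\mathfrak{a}=(a_n)\in I$, $\mathcal{C}_{\mathfrak{a}}:=\prod_{n\in\mathbb{N}}[a_{n},a_{n}+1)$. Define $B^{p}:=\{f\in L^{p}(\mu) : \int_{\mathcal{C}_{\mathfrak{a}}}|f|^{p}\,d\mu=0 \text{ for each } \mathfrak{a}\in I\}$, with the $L^p(\mu)$ norm. *)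

theory Defs
  imports "HOL-Analysis.Analysis"
begin

definition cylinders :: "(nat \<Rightarrow> real) set set" where
  "cylinders = {{x. \<forall>i<m. x i \<in> C i} | m C. \<forall>i<m. C i \<in> sets borel}"

definition B_inf :: "(nat \<Rightarrow> real) set set" where
  "B_inf = sigma_sets UNIV cylinders"

definition partial_vol :: "(nat \<Rightarrow> real set) \<Rightarrow> nat \<Rightarrow> ennreal" where
  "partial_vol C n = (\<Prod>i<n. emeasure lborel (C i))"

definition finite_rect :: "(nat \<Rightarrow> real set) \<Rightarrow> bool" where
  "finite_rect C \<longleftrightarrow> (\<forall>i. C i \<in> sets borel) \<and>
      (\<exists>v::real. 0 \<le> v \<and> partial_vol C \<longlonglongrightarrow> ennreal v)"

definition vol :: "(nat \<Rightarrow> real set) \<Rightarrow> ennreal" where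
  "vol C = lim (partial_vol C)"

text \<open>Outer measure (Inf of the empty set is \<infinity>).\<close>
definition mu_outer :: "(nat \<Rightarrow> real) set \<Rightarrow> ennreal" where
  "mu_outer A = Inf {(\<Sum>n. vol (R n)) | R. (\<forall>n. finite_rect (R n)) \<and>
                       A \<subseteq> (\<Union>n. Pi UNIV (R n))}"

definition mu :: "(nat \<Rightarrow> real) measure" where
  "mu = measure_of UNIV B_inf mu_outer"

definition cube :: "(nat \<Rightarrow> int) \<Rightarrow> (nat \<Rightarrow> real) set" where
  "cube a = Pi UNIV (\<lambda>n. {real_of_int (a n) ..< real_of_int (a n) + 1})"

definition Lp :: "real \<Rightarrow> ((nat \<Rightarrow> real) \<Rightarrow> real) set" where
  "Lp p = {f. f \<in> borel_measurable mu \<and> (\<integral>\<^sup>+ x. ennreal (\<bar>f x\<bar> powr p) \<partial>mu) < \<infinity>}"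

definition Lp_norm :: "real \<Rightarrow> ((nat \<Rightarrow> real) \<Rightarrow> real) \<Rightarrow> real" where
  "Lp_norm p f = (enn2real (\<integral>\<^sup>+ x. ennreal (\<bar>f x\<bar> powr p) \<partial>mu)) powr (1 / p)"

definition Bp :: "real \<Rightarrow> ((nat \<Rightarrow> real) \<Rightarrow> real) set" where
  "Bp p = {f \<in> Lp p. \<forall>a. (\<integral>\<^sup>+ x \<in> cube a. ennreal (\<bar>f x\<bar> powr p) \<partial>mu) = 0}"

text \<open>V (a set of functions, identified modulo mu-a.e. equality) with the seminorm N
  is a Banach space: a linear subspace, N is a seminorm vanishing exactly on
  a.e.-zero functions (so a norm on the quotient), and V is complete.\<close>
definition is_Banach :: "((nat \<Rightarrow> real) \<Rightarrow> real) set \<Rightarrow> (((nat \<Rightarrow> real) \<Rightarrow> real) \<Rightarrow> real) \<Rightarrow> bool" where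
  "is_Banach V N \<longleftrightarrow>
     (\<lambda>x. 0) \<in> V \<and>
     (\<forall>f\<in>V. \<forall>g\<in>V. (\<lambda>x. f x + g x) \<in> V) \<and>
     (\<forall>c. \<forall>f\<in>V. (\<lambda>x. c * f x) \<in> V) \<and>
     (\<forall>f\<in>V. 0 \<le> N f \<and> (N f = 0 \<longleftrightarrow> (AE x in mu. f x = 0))) \<and>
     (\<forall>f\<in>V. \<forall>g\<in>V. N (\<lambda>x. f x + g x) \<le> N f + N g) \<and>
     (\<forall>c. \<forall>f\<in>V. N (\<lambda>x. c * f x) = \<bar>c\<bar> * N f) \<and>
     (\<forall>F. (\<forall>n. F n \<in> V) \<and>
          (\<forall>e>0. \<exists>M. \<forall>m\<ge>M. \<forall>n\<ge>M. N (\<lambda>x. F m x - F n x) < e)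
          \<longrightarrow> (\<exists>g\<in>V. (\<lambda>n. N (\<lambda>x. F n x - g x)) \<longlonglongrightarrow> 0))"

end

theory Submission
  imports Defs
begin

(* The L^p facts needed
  hold for an arbitrary measure: Minkowski's inequality follows from the convexity of t powr p,
  and completeness from the Riesz-Fischer argument: a Cauchy sequence has a subsequence whose
  successive differences have norm at most 4^-k, which by Chebyshev and Borel-Cantelli converges
  a.e., and by Fatou its a.e. limit is also the L^p limit. Vanishing a.e. on a fixed cube survives
  a.e. limits of sequences, so the limit of a Cauchy sequence in B^p lies in B^p. *)

definition Lp_space :: "'a measure \<Rightarrow> real \<Rightarrow> ('a \<Rightarrow> real) set" where
  "Lp_space M p = {f \<in> borel_measurable M. (\<integral>\<^sup>+x. ennreal (\<bar>f x\<bar> powr p) \<partial>M) < \<infinity>}"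

definition Lp_seminorm :: "'a measure \<Rightarrow> real \<Rightarrow> ('a \<Rightarrow> real) \<Rightarrow> real" where
  "Lp_seminorm M p f = enn2real (\<integral>\<^sup>+x. ennreal (\<bar>f x\<bar> powr p) \<partial>M) powr (1 / p)"

lemma Lp_space_borel_measurable: "f \<in> Lp_space M p \<Longrightarrow> f \<in> borel_measurable M"
  by (simp add: Lp_space_def)

lemma Lp_space_iff_integrable:
  "f \<in> Lp_space M p \<longleftrightarrow> f \<in> borel_measurable M \<and> integrable M (\<lambda>x. \<bar>f x\<bar> powr p)"
  by (auto simp: Lp_space_def integrable_iff_bounded)

lemma Lp_seminorm_nonneg: "0 \<le> Lp_seminorm M p f"
  by (simp add: Lp_seminorm_def)

lemma Lp_seminorm_eq_integral:
  assumes "f \<in> Lp_space M p"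
  shows "Lp_seminorm M p f = (\<integral>x. \<bar>f x\<bar> powr p \<partial>M) powr (1 / p)"
  using assms by (simp add: Lp_seminorm_def Lp_space_iff_integrable nn_integral_eq_integral)

lemma Lp_seminorm_powr:
  assumes "f \<in> Lp_space M p" "0 < p"
  shows "Lp_seminorm M p f powr p = (\<integral>x. \<bar>f x\<bar> powr p \<partial>M)"
  using assms by (simp add: Lp_seminorm_eq_integral powr_powr)

lemma nn_integral_powr_eq_Lp_seminorm:
  assumes "f \<in> Lp_space M p" "0 < p"
  shows "(\<integral>\<^sup>+x. ennreal (\<bar>f x\<bar> powr p) \<partial>M) = ennreal (Lp_seminorm M p f powr p)"
  using assms by (simp add: Lp_seminorm_powr Lp_space_iff_integrable nn_integral_eq_integral)

lemma Lp_seminorm_cong_AE: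
  assumes "AE x in M. f x = g x"
  shows "Lp_seminorm M p f = Lp_seminorm M p g"
proof -
  have "(\<integral>\<^sup>+x. ennreal (\<bar>f x\<bar> powr p) \<partial>M) = (\<integral>\<^sup>+x. ennreal (\<bar>g x\<bar> powr p) \<partial>M)"
    using assms by (intro nn_integral_cong_AE) auto
  then show ?thesis
    by (simp add: Lp_seminorm_def)
qed

lemma Lp_seminorm_eq_0_iff:
  assumes "f \<in> Lp_space M p"
  shows "Lp_seminorm M p f = 0 \<longleftrightarrow> (AE x in M. f x = 0)"
proof -
  have "Lp_seminorm M p f = 0 \<longleftrightarrow> (\<integral>x. \<bar>f x\<bar> powr p \<partial>M) = 0"
    using assms by (simp add: Lp_seminorm_eq_integral)
  also have "\<dots> \<longleftrightarrow> (AE x in M. \<bar>f x\<bar> powr p = 0)"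
    using assms by (intro integral_nonneg_eq_0_iff_AE) (auto simp: Lp_space_iff_integrable)
  finally show ?thesis
    by simp
qed

lemma abs_add_powr_le_two_powr:
  fixes a b p :: real
  assumes "0 < p"
  shows "\<bar>a + b\<bar> powr p \<le> 2 powr p * (\<bar>a\<bar> powr p + \<bar>b\<bar> powr p)"
proof -
  have "\<bar>a + b\<bar> powr p \<le> (2 * max \<bar>a\<bar> \<bar>b\<bar>) powr p"
    using assms by (intro powr_mono2) auto
  also have "\<dots> = 2 powr p * max \<bar>a\<bar> \<bar>b\<bar> powr p"
    by (simp add: powr_mult)
  also have "max \<bar>a\<bar> \<bar>b\<bar> powr p \<le> \<bar>a\<bar> powr p + \<bar>b\<bar> powr p"
    by (simp add: max_def)
  finally show ?thesis
    by (simp add: mult_left_mono)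
qed

lemma Lp_space_add:
  assumes "f \<in> Lp_space M p" "g \<in> Lp_space M p" "0 < p"
  shows "(\<lambda>x. f x + g x) \<in> Lp_space M p"
proof -
  have [measurable]: "f \<in> borel_measurable M" "g \<in> borel_measurable M"
    using assms by (auto simp: Lp_space_def)
  have "integrable M (\<lambda>x. 2 powr p * (\<bar>f x\<bar> powr p + \<bar>g x\<bar> powr p))"
    using assms by (auto simp: Lp_space_iff_integrable)
  then have "integrable M (\<lambda>x. \<bar>f x + g x\<bar> powr p)"
    by (rule Bochner_Integration.integrable_bound)
       (auto intro!: order.trans[OF abs_add_powr_le_two_powr[OF \<open>0 < p\<close>]])
  then show ?thesis
    by (simp add: Lp_space_iff_integrable)
qed

lemma Lp_space_cmult:
  assumes "f \<in> Lp_space M p"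
  shows "(\<lambda>x. c * f x) \<in> Lp_space M p"
  using assms by (auto simp: Lp_space_iff_integrable abs_mult powr_mult)

lemma Lp_space_diff:
  assumes "f \<in> Lp_space M p" "g \<in> Lp_space M p" "0 < p"
  shows "(\<lambda>x. f x - g x) \<in> Lp_space M p"
  using Lp_space_add[OF assms(1) Lp_space_cmult[OF assms(2), of "-1"] assms(3)] by simp

lemma Lp_seminorm_cmult:
  assumes "f \<in> Lp_space M p" "0 < p"
  shows "Lp_seminorm M p (\<lambda>x. c * f x) = \<bar>c\<bar> * Lp_seminorm M p f"
  using assms Lp_space_cmult[OF assms(1)]
  by (simp add: Lp_seminorm_eq_integral abs_mult powr_mult powr_powr integral_nonneg)

lemma powr_convex_nonneg:
  fixes x y t p :: real
  assumes "0 \<le> x" "0 \<le> y" "0 \<le> t" "t \<le> 1" "1 \<le> p"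
  shows "(t * x + (1 - t) * y) powr p \<le> t * x powr p + (1 - t) * y powr p"
proof -
  have scale: "(s * z) powr p \<le> s * z powr p" if "0 \<le> s" "s \<le> 1" "0 \<le> z" for s z :: real
  proof -
    have "s powr p \<le> s powr 1"
      using that assms by (intro powr_mono') auto
    then show ?thesis
      using that by (simp add: powr_mult mult_right_mono)
  qed
  show ?thesis
  proof (cases "x = 0 \<or> y = 0 \<or> t = 0 \<or> t = 1")
    case True
    then show ?thesis
      using scale[of t x] scale[of "1 - t" y] assms by auto
  next
    case False
    then show ?thesis
      using assms powr_convex[OF assms(5)] unfolding convex_on_def by auto
  qed
qed

lemma abs_add_powr_le_weighted:
  fixes a b A B p :: real
  assumes "0 < A" "0 < B" "1 \<le> p"
  shows "\<bar>a + b\<bar> powr p \<le>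
    (A + B) powr p * (A / (A + B) * (\<bar>a\<bar> powr p / A powr p) + B / (A + B) * (\<bar>b\<bar> powr p / B powr p))"
proof -
  define t where "t = A / (A + B)"
  have t: "0 \<le> t" "t \<le> 1" "1 - t = B / (A + B)"
    using assms by (auto simp: t_def field_simps)
  have "t * (\<bar>a\<bar> / A) = \<bar>a\<bar> / (A + B)" "(1 - t) * (\<bar>b\<bar> / B) = \<bar>b\<bar> / (A + B)"
    using assms t(3) by (simp_all add: t_def)
  then have "\<bar>a\<bar> + \<bar>b\<bar> = (A + B) * (t * (\<bar>a\<bar> / A) + (1 - t) * (\<bar>b\<bar> / B))"
    using assms by (simp add: add_divide_distrib[symmetric])
  moreover have "\<bar>a + b\<bar> powr p \<le> (\<bar>a\<bar> + \<bar>b\<bar>) powr p"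
    using assms by (intro powr_mono2) auto
  ultimately have "\<bar>a + b\<bar> powr p \<le> (A + B) powr p * (t * (\<bar>a\<bar> / A) + (1 - t) * (\<bar>b\<bar> / B)) powr p"
    using assms t by (simp add: powr_mult)
  also have "\<dots> \<le> (A + B) powr p * (t * (\<bar>a\<bar> / A) powr p + (1 - t) * (\<bar>b\<bar> / B) powr p)"
    using assms t by (intro mult_left_mono powr_convex_nonneg) auto
  finally show ?thesis
    using assms unfolding t(3) by (simp add: t_def powr_divide)
qed

lemma Lp_seminorm_add_eq_if_eq_0:
  assumes "f \<in> Lp_space M p" "Lp_seminorm M p f = 0"
  shows "Lp_seminorm M p (\<lambda>x. f x + g x) = Lp_seminorm M p g"
proof -
  have "AE x in M. f x + g x = g x"
    using assms Lp_seminorm_eq_0_iff[OF assms(1)] by auto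
  then show ?thesis
    by (rule Lp_seminorm_cong_AE)
qed

theorem Lp_seminorm_triangle:
  assumes f: "f \<in> Lp_space M p" and g: "g \<in> Lp_space M p" and "1 \<le> p"
  shows "Lp_seminorm M p (\<lambda>x. f x + g x) \<le> Lp_seminorm M p f + Lp_seminorm M p g"
proof -
  have "0 < p"
    using \<open>1 \<le> p\<close> by simp
  have fg: "(\<lambda>x. f x + g x) \<in> Lp_space M p"
    using f g \<open>0 < p\<close> by (rule Lp_space_add)
  define A B where "A = Lp_seminorm M p f" and "B = Lp_seminorm M p g"
  have "0 \<le> A" "0 \<le> B"
    by (simp_all add: A_def B_def Lp_seminorm_nonneg)
  then consider "A = 0" | "B = 0" | "0 < A" "0 < B"
    by fastforce
  then show ?thesis
  proof cases
    case 1
    then show ?thesis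
      using Lp_seminorm_add_eq_if_eq_0[OF f] by (simp add: A_def)
  next
    case 2
    then show ?thesis
      using Lp_seminorm_add_eq_if_eq_0[OF g, of f] by (simp add: B_def add.commute)
  next
    case 3
    \<comment> \<open>Normalising f and g by their norms makes the integral of the convexity bound exactly (A + B) powr p.\<close>
    have int: "integrable M (\<lambda>x. \<bar>h x\<bar> powr p)" if "h \<in> Lp_space M p" for h
      using that by (simp add: Lp_space_iff_integrable)
    have If: "(\<integral>x. \<bar>f x\<bar> powr p \<partial>M) = A powr p" and Ig: "(\<integral>x. \<bar>g x\<bar> powr p \<partial>M) = B powr p"
      using Lp_seminorm_powr[OF f \<open>0 < p\<close>] Lp_seminorm_powr[OF g \<open>0 < p\<close>] by (simp_all add: A_def B_def)
    define bound where "bound x = (A + B) powr p *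
      (A / (A + B) * (\<bar>f x\<bar> powr p / A powr p) + B / (A + B) * (\<bar>g x\<bar> powr p / B powr p))" for x
    have int_bound: "integrable M bound"
      using int[OF f] int[OF g] unfolding bound_def by simp
    have "(\<integral>x. \<bar>f x + g x\<bar> powr p \<partial>M) \<le> (\<integral>x. bound x \<partial>M)"
      using 3 \<open>1 \<le> p\<close> unfolding bound_def
      by (intro integral_mono int fg int_bound[unfolded bound_def] abs_add_powr_le_weighted)
    also have "\<dots> = (A + B) powr p * (A / (A + B) + B / (A + B))"
      using 3 int[OF f] int[OF g] unfolding bound_def by (simp add: If Ig)
    also have "\<dots> = (A + B) powr p"
      using 3 by (simp add: add_divide_distrib[symmetric])
    finally have "(\<integral>x. \<bar>f x + g x\<bar> powr p \<partial>M) powr (1 / p) \<le> ((A + B) powr p) powr (1 / p)"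
      using \<open>0 < p\<close> by (intro powr_mono2 integral_nonneg) auto
    also have "\<dots> = A + B"
      using 3 \<open>0 < p\<close> by (simp add: powr_powr)
    finally show ?thesis
      using fg by (simp add: Lp_seminorm_eq_integral A_def B_def)
  qed
qed

lemma powr_le_iff_le:
  fixes x y p :: real
  assumes "0 \<le> x" "0 \<le> y" "0 < p"
  shows "x powr p \<le> y powr p \<longleftrightarrow> x \<le> y"
  using assms by (meson not_le powr_less_mono2 powr_mono2 less_imp_le)

lemma emeasure_abs_ge_le_Lp_seminorm:
  assumes f: "f \<in> Lp_space M p" and "0 < p" "0 < c"
  shows "emeasure M {x \<in> space M. c \<le> \<bar>f x\<bar>} \<le> ennreal ((Lp_seminorm M p f / c) powr p)"
proof -
  have "{x \<in> space M. c \<le> \<bar>f x\<bar>} = {x \<in> space M. c powr p \<le> \<bar>f x\<bar> powr p}"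
    using assms by (auto simp: powr_le_iff_le)
  also have "emeasure M \<dots> \<le> ennreal (1 / c powr p * (\<integral>x. \<bar>f x\<bar> powr p \<partial>M))"
    using f \<open>0 < c\<close> by (intro integral_Markov_inequality) (auto simp: Lp_space_iff_integrable)
  also have "1 / c powr p * (\<integral>x. \<bar>f x\<bar> powr p \<partial>M) = (Lp_seminorm M p f / c) powr p"
    using assms Lp_seminorm_nonneg by (simp add: Lp_seminorm_powr powr_divide)
  finally show ?thesis .
qed

lemma Lp_seminorm_le_of_AE_tendsto:
  assumes "0 < p"
    and h: "\<And>k. h k \<in> Lp_space M p" and f [measurable]: "f \<in> borel_measurable M"
    and lim: "AE x in M. (\<lambda>k. h k x) \<longlonglongrightarrow> f x"
    and bound: "eventually (\<lambda>k. Lp_seminorm M p (h k) \<le> c) sequentially"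
  shows "f \<in> Lp_space M p" and "Lp_seminorm M p f \<le> c"
proof -
  have [measurable]: "h k \<in> borel_measurable M" for k
    using h by (rule Lp_space_borel_measurable)
  obtain k where "Lp_seminorm M p (h k) \<le> c"
    using bound by (auto simp: eventually_sequentially)
  then have "0 \<le> c"
    using Lp_seminorm_nonneg order.trans by blast
  have "(\<integral>\<^sup>+x. ennreal (\<bar>f x\<bar> powr p) \<partial>M) = (\<integral>\<^sup>+x. liminf (\<lambda>k. ennreal (\<bar>h k x\<bar> powr p)) \<partial>M)"
  proof (rule nn_integral_cong_AE)
    show "AE x in M. ennreal (\<bar>f x\<bar> powr p) = liminf (\<lambda>k. ennreal (\<bar>h k x\<bar> powr p))"
      using lim
    proof eventually_elim
      case (elim x)
      then have "(\<lambda>k. ennreal (\<bar>h k x\<bar> powr p)) \<longlonglongrightarrow> ennreal (\<bar>f x\<bar> powr p)"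
        using \<open>0 < p\<close> by (intro tendsto_ennrealI tendsto_powr' tendsto_rabs) auto
      then show ?case
        by (metis lim_imp_Liminf trivial_limit_sequentially)
    qed
  qed
  also have "\<dots> \<le> liminf (\<lambda>k. \<integral>\<^sup>+x. ennreal (\<bar>h k x\<bar> powr p) \<partial>M)"
    by (rule nn_integral_liminf) measurable
  also have "\<dots> \<le> ennreal (c powr p)"
  proof (rule Liminf_le)
    show "\<forall>\<^sub>F k in sequentially. (\<integral>\<^sup>+x. ennreal (\<bar>h k x\<bar> powr p) \<partial>M) \<le> ennreal (c powr p)"
      using bound
      by eventually_elim
         (use \<open>0 < p\<close> in \<open>auto simp: nn_integral_powr_eq_Lp_seminorm[OF h]
                         intro: powr_mono2 Lp_seminorm_nonneg\<close>)
  qed simp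
  finally have le: "(\<integral>\<^sup>+x. ennreal (\<bar>f x\<bar> powr p) \<partial>M) \<le> ennreal (c powr p)" .
  then show "f \<in> Lp_space M p"
    using order.strict_trans1[OF _ ennreal_less_top] by (simp add: Lp_space_def)
  have "Lp_seminorm M p f \<le> (c powr p) powr (1 / p)"
    using le \<open>0 < p\<close> unfolding Lp_seminorm_def by (intro powr_mono2 enn2real_leI) auto
  then show "Lp_seminorm M p f \<le> c"
    using \<open>0 < p\<close> \<open>0 \<le> c\<close> by (simp add: powr_powr)
qed

lemma exists_strict_mono_ge:
  fixes N :: "nat \<Rightarrow> nat"
  obtains r where "strict_mono r" "\<And>k. N k \<le> r k"
proof
  show "strict_mono (\<lambda>k. (\<Sum>i\<le>k. N i) + k)"
    by (rule strict_monoI_Suc) simp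
  show "N k \<le> (\<Sum>i\<le>k. N i) + k" for k
    using member_le_sum[of k "{..k}" N] by simp
qed

lemma convergent_if_summable_Suc_diff:
  fixes u :: "nat \<Rightarrow> real"
  assumes "summable (\<lambda>k. u (Suc k) - u k)"
  shows "convergent u"
proof -
  have "convergent (\<lambda>n. u n - u 0)"
    using assms by (simp add: summable_iff_convergent sum_lessThan_telescope)
  then have "convergent (\<lambda>n. (u n - u 0) + u 0)"
    by (intro convergent_add convergent_const)
  then show ?thesis
    by simp
qed

lemma AE_summable_if_Lp_seminorm_le_quarter_power:
  assumes "0 < p" and d: "\<And>k. d k \<in> Lp_space M p"
    and small: "\<And>k. Lp_seminorm M p (d k) \<le> (1 / 4) ^ k"
  shows "AE x in M. summable (\<lambda>k. d k x)"
proof -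
  have [measurable]: "d k \<in> borel_measurable M" for k
    using d by (rule Lp_space_borel_measurable)
  define E where "E k = {x \<in> space M. (1 / 2) ^ k \<le> \<bar>d k x\<bar>}" for k
  have [measurable]: "E k \<in> sets M" for k
    unfolding E_def by measurable
  have E_le: "emeasure M (E k) \<le> ennreal ((1 / 2 powr p) ^ k)" for k
  proof -
    have "Lp_seminorm M p (d k) / (1 / 2) ^ k \<le> (1 / 2) ^ k"
      using small[of k] by (simp add: pos_divide_le_eq power_mult_distrib[symmetric])
    then have "(Lp_seminorm M p (d k) / (1 / 2) ^ k) powr p \<le> ((1 / 2) ^ k) powr p"
      using \<open>0 < p\<close> Lp_seminorm_nonneg[of M p "d k"] by (intro powr_mono2) simp_all
    also have "((1 / 2 :: real) ^ k) powr p = (1 / 2 powr p) ^ k"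
      by (simp add: powr_realpow[symmetric] powr_powr powr_power powr_divide mult.commute)
    finally have "ennreal ((Lp_seminorm M p (d k) / (1 / 2) ^ k) powr p) \<le> ennreal ((1 / 2 powr p) ^ k)"
      by (rule ennreal_leI)
    moreover have "emeasure M (E k) \<le> ennreal ((Lp_seminorm M p (d k) / (1 / 2) ^ k) powr p)"
      unfolding E_def by (rule emeasure_abs_ge_le_Lp_seminorm[OF d \<open>0 < p\<close>]) simp
    ultimately show ?thesis
      by (rule order.trans[rotated])
  qed
  have E_finite: "emeasure M (E k) < \<infinity>" for k
    using order.strict_trans1[OF E_le ennreal_less_top] by simp
  have "summable (\<lambda>k. measure M (E k))"
  proof (rule summable_comparison_test')
    show "summable (\<lambda>k. (1 / 2 powr p) ^ k)"
      using \<open>0 < p\<close> by (intro summable_geometric) simp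
    show "norm (measure M (E k)) \<le> (1 / 2 powr p) ^ k" for k
      using E_le[of k] E_finite[of k] by (simp add: emeasure_eq_ennreal_measure)
  qed
  then have "AE x in M. eventually (\<lambda>k. x \<in> space M - E k) sequentially"
    using E_finite by (intro borel_cantelli_AE1) auto
  then show ?thesis
  proof eventually_elim
    case (elim x)
    then have "eventually (\<lambda>k. norm (d k x) \<le> (1 / 2) ^ k) sequentially"
      by eventually_elim (auto simp: E_def)
    then show ?case
      by (rule summable_comparison_test_ev) (simp add: summable_geometric)
  qed
qed

lemma Lp_Cauchy_AE_convergent_subseq:
  fixes F :: "nat \<Rightarrow> 'a \<Rightarrow> real"
  assumes "0 < p" and F: "\<And>n. F n \<in> Lp_space M p"
    and Cauchy: "\<And>e. 0 < e \<Longrightarrow> \<exists>N. \<forall>m\<ge>N. \<forall>n\<ge>N. Lp_seminorm M p (\<lambda>x. F m x - F n x) < e"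
  obtains r g where "strict_mono r" "g \<in> borel_measurable M" "AE x in M. (\<lambda>k. F (r k) x) \<longlonglongrightarrow> g x"
proof -
  have [measurable]: "F n \<in> borel_measurable M" for n
    using F by (rule Lp_space_borel_measurable)
  have "\<forall>k. \<exists>N. \<forall>m\<ge>N. \<forall>n\<ge>N. Lp_seminorm M p (\<lambda>x. F m x - F n x) < (1 / 4) ^ k"
    using Cauchy by simp
  then obtain N where N: "\<And>k m n. N k \<le> m \<Longrightarrow> N k \<le> n \<Longrightarrow> Lp_seminorm M p (\<lambda>x. F m x - F n x) < (1 / 4) ^ k"
    by metis
  obtain r where r: "strict_mono r" "\<And>k. N k \<le> r k"
    using exists_strict_mono_ge[of N] by blast
  have "AE x in M. summable (\<lambda>k. F (r (Suc k)) x - F (r k) x)"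
  proof (rule AE_summable_if_Lp_seminorm_le_quarter_power[OF \<open>0 < p\<close>])
    show "(\<lambda>x. F (r (Suc k)) x - F (r k) x) \<in> Lp_space M p" for k
      by (intro Lp_space_diff F \<open>0 < p\<close>)
    show "Lp_seminorm M p (\<lambda>x. F (r (Suc k)) x - F (r k) x) \<le> (1 / 4) ^ k" for k
      using r(2)[of k] strict_mono_leD[OF r(1), of k "Suc k"] by (intro less_imp_le[OF N]) auto
  qed
  then have "AE x in M. convergent (\<lambda>k. F (r k) x)"
    by eventually_elim (rule convergent_if_summable_Suc_diff)
  then have "AE x in M. (\<lambda>k. F (r k) x) \<longlonglongrightarrow> lim (\<lambda>k. F (r k) x)"
    by eventually_elim (simp add: convergent_LIMSEQ_iff)
  moreover have "(\<lambda>x. lim (\<lambda>k. F (r k) x)) \<in> borel_measurable M"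
    by measurable
  ultimately show ?thesis
    using r(1) that by blast
qed

lemma Lp_Cauchy_tendsto_AE_limit:
  fixes F :: "nat \<Rightarrow> 'a \<Rightarrow> real"
  assumes "0 < p" and F: "\<And>n. F n \<in> Lp_space M p"
    and Cauchy: "\<And>e. 0 < e \<Longrightarrow> \<exists>N. \<forall>m\<ge>N. \<forall>n\<ge>N. Lp_seminorm M p (\<lambda>x. F m x - F n x) < e"
    and "strict_mono r" and [measurable]: "g \<in> borel_measurable M"
    and lim: "AE x in M. (\<lambda>k. F (r k) x) \<longlonglongrightarrow> g x"
  shows "g \<in> Lp_space M p" and "(\<lambda>n. Lp_seminorm M p (\<lambda>x. F n x - g x)) \<longlonglongrightarrow> 0"
proof -
  have [measurable]: "F n \<in> borel_measurable M" for n
    using F by (rule Lp_space_borel_measurable)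
  have close: "(\<lambda>x. F n x - g x) \<in> Lp_space M p \<and> Lp_seminorm M p (\<lambda>x. F n x - g x) \<le> e"
    if N: "\<forall>m\<ge>N. \<forall>n\<ge>N. Lp_seminorm M p (\<lambda>x. F m x - F n x) < e" and "N \<le> n" for N n e
  proof -
    have "AE x in M. (\<lambda>k. F n x - F (r k) x) \<longlonglongrightarrow> F n x - g x"
      using lim by eventually_elim (intro tendsto_diff tendsto_const)
    moreover have "eventually (\<lambda>k. Lp_seminorm M p (\<lambda>x. F n x - F (r k) x) \<le> e) sequentially"
      unfolding eventually_sequentially
      using N \<open>N \<le> n\<close> seq_suble[OF \<open>strict_mono r\<close>] by (meson less_imp_le order.trans)
    ultimately show ?thesis
      using Lp_seminorm_le_of_AE_tendsto[OF \<open>0 < p\<close> Lp_space_diff[OF F F \<open>0 < p\<close>]] by simp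
  qed
  obtain N where "\<forall>m\<ge>N. \<forall>n\<ge>N. Lp_seminorm M p (\<lambda>x. F m x - F n x) < 1"
    using Cauchy[of 1] by auto
  then have "(\<lambda>x. F N x - g x) \<in> Lp_space M p"
    using close by blast
  from Lp_space_diff[OF F[of N] this \<open>0 < p\<close>] show "g \<in> Lp_space M p"
    by simp
  show "(\<lambda>n. Lp_seminorm M p (\<lambda>x. F n x - g x)) \<longlonglongrightarrow> 0"
  proof (rule LIMSEQ_I)
    fix e :: real
    assume "0 < e"
    then obtain N where N: "\<forall>m\<ge>N. \<forall>n\<ge>N. Lp_seminorm M p (\<lambda>x. F m x - F n x) < e / 2"
      using Cauchy[of "e / 2"] by auto
    have "norm (Lp_seminorm M p (\<lambda>x. F n x - g x) - 0) < e" if "N \<le> n" for n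
    proof -
      have "Lp_seminorm M p (\<lambda>x. F n x - g x) \<le> e / 2"
        using close[OF N that] by blast
      then show ?thesis
        using \<open>0 < e\<close> Lp_seminorm_nonneg[of M p "\<lambda>x. F n x - g x"] by simp
    qed
    then show "\<exists>N. \<forall>n\<ge>N. norm (Lp_seminorm M p (\<lambda>x. F n x - g x) - 0) < e"
      by blast
  qed
qed

lemma Lp_eq_Lp_space: "Lp p = Lp_space mu p"
  by (simp add: Lp_def Lp_space_def)

lemma Lp_norm_eq_Lp_seminorm: "Lp_norm p = Lp_seminorm mu p"
  by (simp add: fun_eq_iff Lp_norm_def Lp_seminorm_def)

lemma sets_mu: "sets mu = B_inf"
  unfolding mu_def B_inf_def by (simp add: sets_measure_of sigma_sets_sigma_sets_eq)

lemma cylinder_in_sets_mu: "(\<And>i. i < m \<Longrightarrow> C i \<in> sets borel) \<Longrightarrow> {x. \<forall>i<m. x i \<in> C i} \<in> sets mu"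
  unfolding sets_mu B_inf_def cylinders_def by (rule sigma_sets.Basic) blast

lemma cube_in_sets_mu: "cube a \<in> sets mu"
proof -
  define C where "C i = {real_of_int (a i) ..< real_of_int (a i) + 1}" for i
  have "cube a = (\<Inter>m. {x. \<forall>i<m. x i \<in> C i})"
    unfolding cube_def C_def by auto (meson lessI)+
  also have "\<dots> \<in> sets mu"
  proof -
    have "{x. \<forall>i<m. x i \<in> C i} \<in> sets mu" for m
      by (rule cylinder_in_sets_mu) (simp add: C_def)
    then show ?thesis
      by (intro sets.countable_INT') auto
  qed
  finally show ?thesis .
qed

lemma nn_integral_powr_on_eq_0_iff:
  assumes "A \<in> sets M" and [measurable]: "f \<in> borel_measurable M"
  shows "(\<integral>\<^sup>+x\<in>A. ennreal (\<bar>f x\<bar> powr p) \<partial>M) = 0 \<longleftrightarrow> (AE x in M. x \<in> A \<longrightarrow> f x = 0)"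
  using assms(1) by (subst nn_integral_0_iff_AE) (auto simp: indicator_def intro!: AE_cong)

lemma Bp_iff: "f \<in> Bp p \<longleftrightarrow> f \<in> Lp_space mu p \<and> (\<forall>a. AE x in mu. x \<in> cube a \<longrightarrow> f x = 0)"
  by (auto simp: Bp_def Lp_eq_Lp_space nn_integral_powr_on_eq_0_iff[OF cube_in_sets_mu]
           dest: Lp_space_borel_measurable)

lemma AE_eq_0_on_if_AE_tendsto:
  assumes "\<And>k. AE x in M. x \<in> A \<longrightarrow> h k x = 0" and "AE x in M. (\<lambda>k. h k x) \<longlonglongrightarrow> g x"
  shows "AE x in M. x \<in> A \<longrightarrow> g x = (0::real)"
proof -
  have "AE x in M. \<forall>k. x \<in> A \<longrightarrow> h k x = 0"
    using assms(1) by (intro AE_all_countable[THEN iffD2]) blast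
  then show ?thesis
    using assms(2) by eventually_elim (auto simp: LIMSEQ_const_iff)
qed

lemma zero_in_Bp: "(\<lambda>x. 0) \<in> Bp p"
  by (simp add: Bp_iff Lp_space_def)

lemma Bp_add:
  assumes "f \<in> Bp p" "g \<in> Bp p" "0 < p"
  shows "(\<lambda>x. f x + g x) \<in> Bp p"
proof -
  have "AE x in mu. x \<in> cube a \<longrightarrow> f x + g x = 0" for a
  proof -
    have "AE x in mu. x \<in> cube a \<longrightarrow> f x = 0" "AE x in mu. x \<in> cube a \<longrightarrow> g x = 0"
      using assms(1,2) by (simp_all add: Bp_iff)
    then show ?thesis
      by eventually_elim simp
  qed
  then show ?thesis
    using assms by (simp add: Bp_iff Lp_space_add)
qed

lemma Bp_cmult:
  assumes "f \<in> Bp p"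
  shows "(\<lambda>x. c * f x) \<in> Bp p"
  using assms by (auto simp: Bp_iff Lp_space_cmult elim!: eventually_mono)

lemma Bp_complete:
  assumes "0 < p" and F: "\<And>n. F n \<in> Bp p"
    and Cauchy: "\<And>e. 0 < e \<Longrightarrow> \<exists>N. \<forall>m\<ge>N. \<forall>n\<ge>N. Lp_seminorm mu p (\<lambda>x. F m x - F n x) < e"
  shows "\<exists>g\<in>Bp p. (\<lambda>n. Lp_seminorm mu p (\<lambda>x. F n x - g x)) \<longlonglongrightarrow> 0"
proof -
  have FL: "F n \<in> Lp_space mu p" for n
    using F by (simp add: Bp_iff)
  obtain r g where r: "strict_mono r" and g: "g \<in> borel_measurable mu"
    and lim: "AE x in mu. (\<lambda>k. F (r k) x) \<longlonglongrightarrow> g x"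
    by (rule Lp_Cauchy_AE_convergent_subseq[OF \<open>0 < p\<close> FL Cauchy])
  have "AE x in mu. x \<in> cube a \<longrightarrow> g x = 0" for a
  proof (rule AE_eq_0_on_if_AE_tendsto[OF _ lim])
    show "AE x in mu. x \<in> cube a \<longrightarrow> F (r k) x = 0" for k
      using F[of "r k"] by (simp add: Bp_iff)
  qed
  moreover note Lp_Cauchy_tendsto_AE_limit[OF \<open>0 < p\<close> FL Cauchy r g lim]
  ultimately show ?thesis
    by (intro bexI[of _ g]) (simp_all add: Bp_iff)
qed

theorem lemma3p5:
  fixes p :: real
  assumes "1 \<le> p"
  shows "is_Banach (Bp p) (Lp_norm p)"
proof -
  have "0 < p"
    using assms by simp
  have Lp: "f \<in> Lp_space mu p" if "f \<in> Bp p" for f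
    using that by (simp add: Bp_iff)
  show ?thesis
    unfolding is_Banach_def Lp_norm_eq_Lp_seminorm
  proof (intro conjI ballI allI impI)
    show "(\<lambda>x. 0) \<in> Bp p"
      by (rule zero_in_Bp)
  next
    fix f g
    assume "f \<in> Bp p" "g \<in> Bp p"
    then show "(\<lambda>x. f x + g x) \<in> Bp p"
      and "Lp_seminorm mu p (\<lambda>x. f x + g x) \<le> Lp_seminorm mu p f + Lp_seminorm mu p g"
      using \<open>0 < p\<close> assms by (simp_all add: Bp_add Lp Lp_seminorm_triangle)
  next
    fix c f
    assume "f \<in> Bp p"
    then show "(\<lambda>x. c * f x) \<in> Bp p" and "Lp_seminorm mu p (\<lambda>x. c * f x) = \<bar>c\<bar> * Lp_seminorm mu p f"
      using \<open>0 < p\<close> by (simp_all add: Bp_cmult Lp Lp_seminorm_cmult)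
  next
    fix f
    assume "f \<in> Bp p"
    then show "0 \<le> Lp_seminorm mu p f" and "Lp_seminorm mu p f = 0 \<longleftrightarrow> (AE x in mu. f x = 0)"
      by (simp_all add: Lp Lp_seminorm_nonneg Lp_seminorm_eq_0_iff)
  next
    fix F :: "nat \<Rightarrow> (nat \<Rightarrow> real) \<Rightarrow> real"
    assume "(\<forall>n. F n \<in> Bp p) \<and> (\<forall>e>0. \<exists>M. \<forall>m\<ge>M. \<forall>n\<ge>M. Lp_seminorm mu p (\<lambda>x. F m x - F n x) < e)"
    then show "\<exists>g\<in>Bp p. (\<lambda>n. Lp_seminorm mu p (\<lambda>x. F n x - g x)) \<longlonglongrightarrow> 0"
      using Bp_complete[OF \<open>0 < p\<close>] by blast
  qed
qed

end
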